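(* Let $s\in(0,1/2)$, $a:=1-2s$, let $\mathcal{N}\subset\mathbb{R}^d$ be a compact smooth submanifold without boundary, and let $v\in H^1(B_1^+;\mathbb{R}^d,y^ad\mathbf{x})$ be such that $v(\mathbf{x})\in\mathcal{N}$ for a.e. $\mathbf{x}\in\partial^0B_1^+$. Setting $\bar v:=\frac{2}{\pi}\int_{B_1^+}v\,d\mathbf{x}$, one has $$d_{\mathcal{N}}(\bar v)\le C\big(\mathbf{E}_s(v,B_1^+)\big)^{1/2}$$ for some constant $C=C(s)$.
   Context: $B_1^+:=\{(x,y):x^2+y^2<1,\ y>0\}$, $\partial^0B_1^+:=(-1,1)\times\{0\}$. $H^1(B_1^+;\mathbb{R}^d,y^ad\mathbf{x})$ is the space of $v$ with $\int_{B_1^+}y^a(|v|^2+|\nabla v|^2)d\mathbf{x}<\infty$ (traces on $\partial^0B_1^+$ are well defined), $\mathbf{E}_s(v,B_1^+):=\frac12\int_{B_1^+}y^a|\nabla v|^2d\mathbf{x}$, and $d_{\mathcal{N}}(z):=\inf_{p\in\mathcal{N}}|z-p|$. *)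

theory Defs
  imports "HOL-Analysis.Analysis"
begin

fun Ck :: "nat \<Rightarrow> 'a::euclidean_space set \<Rightarrow> ('a \<Rightarrow> 'b::real_normed_vector) \<Rightarrow> bool" where
  "Ck 0 U f = continuous_on U f"
| "Ck (Suc k) U f = (\<exists>f'. (\<forall>x\<in>U. (f has_derivative f' x) (at x)) \<and>
                          (\<forall>i\<in>Basis. Ck k U (\<lambda>x. f' x i)))"

definition smooth_on :: "'a::euclidean_space set \<Rightarrow> ('a \<Rightarrow> 'b::real_normed_vector) \<Rightarrow> bool" where
  "smooth_on U f \<longleftrightarrow> open U \<and> (\<forall>k. Ck k U f)"

text \<open>Smooth embedded submanifold without boundary: locally straightened to a linear subspace
  by a smooth diffeomorphism of the ambient space.\<close>
definition smooth_submanifold :: "'e::euclidean_space set \<Rightarrow> bool" where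
  "smooth_submanifold N \<longleftrightarrow>
     (\<forall>p\<in>N. \<exists>U V (\<phi>::'e \<Rightarrow> 'e) (\<psi>::'e \<Rightarrow> 'e) L.
        open U \<and> p \<in> U \<and> open V \<and> smooth_on U \<phi> \<and> smooth_on V \<psi> \<and>
        \<phi> ` U = V \<and> (\<forall>x\<in>U. \<psi> (\<phi> x) = x) \<and> (\<forall>y\<in>V. \<phi> (\<psi> y) = y) \<and>
        subspace L \<and> \<phi> ` (N \<inter> U) = L \<inter> V)"

definition half_ball :: "(real \<times> real) set" where
  "half_ball = {p. (fst p)\<^sup>2 + (snd p)\<^sup>2 < 1 \<and> snd p > 0}"

definition dx :: "(real \<times> real \<Rightarrow> 'b::real_normed_vector) \<Rightarrow> real \<times> real \<Rightarrow> 'b" where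
  "dx f p = frechet_derivative f (at p) (1, 0)"
definition dy :: "(real \<times> real \<Rightarrow> 'b::real_normed_vector) \<Rightarrow> real \<times> real \<Rightarrow> 'b" where
  "dy f p = frechet_derivative f (at p) (0, 1)"

definition weighted_H1 :: "real \<Rightarrow> (real \<times> real \<Rightarrow> 'e::euclidean_space)
     \<Rightarrow> (real \<times> real \<Rightarrow> 'e) \<Rightarrow> (real \<times> real \<Rightarrow> 'e) \<Rightarrow> bool" where
  "weighted_H1 a v g1 g2 \<longleftrightarrow>
     set_borel_measurable lborel half_ball v \<and>
     set_borel_measurable lborel half_ball g1 \<and>
     set_borel_measurable lborel half_ball g2 \<and>
     (\<integral>\<^sup>+ p\<in>half_ball. ennreal (snd p powr a *
         ((norm (v p))\<^sup>2 + (norm (g1 p))\<^sup>2 + (norm (g2 p))\<^sup>2)) \<partial>lborel) < \<infinity> \<and>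
     (\<forall>\<phi>::real \<times> real \<Rightarrow> real.
        smooth_on UNIV \<phi> \<and> compact (closure {p. \<phi> p \<noteq> 0}) \<and>
        closure {p. \<phi> p \<noteq> 0} \<subseteq> half_ball \<longrightarrow>
        (LINT p:half_ball|lborel. dx \<phi> p *\<^sub>R v p) = - (LINT p:half_ball|lborel. \<phi> p *\<^sub>R g1 p) \<and>
        (LINT p:half_ball|lborel. dy \<phi> p *\<^sub>R v p) = - (LINT p:half_ball|lborel. \<phi> p *\<^sub>R g2 p))"

text \<open>T is the trace of v on the flat boundary (-1,1) x {0}: limit of boundary values of smooth
  functions converging to v in the weighted H^1 norm (definition of the trace operator by density).\<close>
definition has_trace :: "real \<Rightarrow> (real \<times> real \<Rightarrow> 'e::euclidean_space)
     \<Rightarrow> (real \<times> real \<Rightarrow> 'e) \<Rightarrow> (real \<times> real \<Rightarrow> 'e) \<Rightarrow> (real \<Rightarrow> 'e) \<Rightarrow> bool" where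
  "has_trace a v g1 g2 T \<longleftrightarrow>
     (\<exists>u :: nat \<Rightarrow> real \<times> real \<Rightarrow> 'e.
        (\<forall>n. smooth_on UNIV (u n)) \<and>
        ((\<lambda>n. \<integral>\<^sup>+ p\<in>half_ball. ennreal (snd p powr a *
            ((norm (u n p - v p))\<^sup>2 + (norm (dx (u n) p - g1 p))\<^sup>2 + (norm (dy (u n) p - g2 p))\<^sup>2))
            \<partial>lborel) \<longlonglongrightarrow> 0) \<and>
        ((\<lambda>n. \<integral>\<^sup>+ x\<in>{-1<..<1}. ennreal ((norm (u n (x, 0) - T x))\<^sup>2) \<partial>lborel) \<longlonglongrightarrow> 0))"

definition energy_s :: "real \<Rightarrow> (real \<times> real \<Rightarrow> 'e::euclidean_space) \<Rightarrow> (real \<times> real \<Rightarrow> 'e) \<Rightarrow> real" where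
  "energy_s a g1 g2 = 1/2 * (LINT p:half_ball|lborel. snd p powr a * ((norm (g1 p))\<^sup>2 + (norm (g2 p))\<^sup>2))"

end

theory Submission
  imports Defs
begin

text \<open>Approximate v by smooth functions u whose boundary values are close to the trace T, which lies
  in N. For a C1 function u and \<bar>x\<bar> < 1/2, each point (x', y) of the half ball is joined to (x, 0) by
  the path down to height y/2, across to (x, y/2) and down again, which stays in the half ball;
  integrating the gradient along these paths shows that, on average over x in (-1/2, 1/2), the
  half-ball mean of u is within 4 times the L1 norm of the gradient of u from u(x, 0). Since
  a = 1 - 2s < 1, the weight y powr -a has mass at most 1/s on the half ball, so by Cauchy-Schwarz the
  L1 norms are controlled by the weighted L2 norms of the energy. Averaging the bound
  infdist (mean v) N \<le> |mean v - mean u| + |mean u - u(x, 0)| + |u(x, 0) - T x| over x and letting u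
  tend to v gives the constant 8 / sqrt s.\<close>

lemma power2_add_le: "((x::real) + y)\<^sup>2 \<le> 2 * (x\<^sup>2 + y\<^sup>2)"
proof -
  have "2 * (x\<^sup>2 + y\<^sup>2) - (x + y)\<^sup>2 = (x - y)\<^sup>2"
    by (simp add: power2_eq_square algebra_simps)
  then show ?thesis
    using zero_le_power2[of "x - y"] by linarith
qed

lemma power2_le_imp_le_ennreal_sqrt:
  assumes "x\<^sup>2 \<le> ennreal c"
  shows "x \<le> ennreal (sqrt c)"
proof (cases x rule: ennreal_cases)
  case (real r)
  then show ?thesis
    using assms by (auto simp: ennreal_power ennreal_le_iff2 intro: real_le_rsqrt ennreal_leI)
qed (use assms in \<open>simp add: top_unique\<close>)

lemma set_nn_integral_eq_set_integral:
  fixes f :: "'a \<Rightarrow> real"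
  assumes "(\<lambda>x. indicator A x * f x) \<in> borel_measurable M" "\<And>x. 0 \<le> f x"
    and "(\<integral>\<^sup>+ x\<in>A. ennreal (f x) \<partial>M) < \<infinity>"
  shows "(\<integral>\<^sup>+ x\<in>A. ennreal (f x) \<partial>M) = ennreal (LINT x:A|M. f x)"
proof -
  have eq: "(\<integral>\<^sup>+ x\<in>A. ennreal (f x) \<partial>M) = (\<integral>\<^sup>+ x. ennreal (indicator A x * f x) \<partial>M)"
    by (intro nn_integral_cong) (simp split: split_indicator)
  have "integrable M (\<lambda>x. indicator A x * f x)"
    using assms eq by (intro integrableI_nonneg) simp_all
  with eq assms(2) show ?thesis
    unfolding set_lebesgue_integral_def by (simp add: nn_integral_eq_integral)
qed

lemma borel_measurable_fst [measurable]: "(fst :: real \<times> real \<Rightarrow> real) \<in> borel_measurable borel"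
  by (intro borel_measurable_continuous_onI continuous_intros)

lemma borel_measurable_snd [measurable]: "(snd :: real \<times> real \<Rightarrow> real) \<in> borel_measurable borel"
  by (intro borel_measurable_continuous_onI continuous_intros)

lemma nn_integral_lborel_fst:
  fixes f :: "real \<times> real \<Rightarrow> ennreal"
  assumes "f \<in> borel_measurable borel"
  shows "(\<integral>\<^sup>+ x. \<integral>\<^sup>+ y. f (x, y) \<partial>lborel \<partial>lborel) = (\<integral>\<^sup>+ p. f p \<partial>lborel)"
  using lborel.nn_integral_fst[of f] assms by (simp add: lborel_prod)

lemma nn_integral_lborel_snd:
  fixes f :: "real \<times> real \<Rightarrow> ennreal"
  assumes "f \<in> borel_measurable borel"
  shows "(\<integral>\<^sup>+ y. \<integral>\<^sup>+ x. f (x, y) \<partial>lborel \<partial>lborel) = (\<integral>\<^sup>+ p. f p \<partial>lborel)"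
  using lborel_pair.nn_integral_snd[of f] assms by (simp add: lborel_prod)

lemma norm_diff_le_nn_integral_directional_derivative:
  fixes u :: "'a::real_normed_vector \<Rightarrow> 'e::euclidean_space"
  assumes D: "\<And>p. (u has_derivative u' p) (at p)"
    and C: "continuous_on UNIV (\<lambda>p. u' p e)"
    and "\<alpha> \<le> \<beta>"
  shows "ennreal (norm (u (a + \<beta> *\<^sub>R e) - u (a + \<alpha> *\<^sub>R e)))
    \<le> (\<integral>\<^sup>+ t\<in>{\<alpha>..\<beta>}. ennreal (norm (u' (a + t *\<^sub>R e) e)) \<partial>lborel)"
proof -
  define f where "f t = u (a + t *\<^sub>R e)" for t
  define f' where "f' t = u' (a + t *\<^sub>R e) e" for t
  have "(f has_vector_derivative f' t) (at t)" for t
  proof -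
    have "(f has_derivative (\<lambda>h. u' (a + t *\<^sub>R e) (h *\<^sub>R e))) (at t)"
      unfolding f_def by (rule has_derivative_compose[OF _ D, unfolded o_def]) (auto intro!: derivative_eq_intros)
    moreover have "u' (a + t *\<^sub>R e) (h *\<^sub>R e) = h *\<^sub>R f' t" for h
      using D[of "a + t *\<^sub>R e"] by (simp add: f'_def has_derivative_def linear_scale bounded_linear.linear)
    ultimately show ?thesis
      by (simp add: has_vector_derivative_def)
  qed
  then have "(f' has_integral f \<beta> - f \<alpha>) {\<alpha>..\<beta>}"
    using \<open>\<alpha> \<le> \<beta>\<close> by (intro fundamental_theorem_of_calculus) (auto intro: has_vector_derivative_at_within)
  moreover have "(\<lambda>t. norm (f' t)) integrable_on {\<alpha>..\<beta>}"
    unfolding f'_def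
    by (intro integrable_continuous_interval continuous_on_norm continuous_on_compose2[OF C]) (auto intro!: continuous_intros)
  ultimately have "norm (f \<beta> - f \<alpha>) \<le> integral {\<alpha>..\<beta>} (\<lambda>t. norm (f' t))"
    by (metis has_integral_integrable integral_norm_bound_integral integral_unique order_refl)
  moreover have "(\<integral>\<^sup>+ t. ennreal (indicator {\<alpha>..\<beta>} t * norm (f' t)) \<partial>lborel) = ennreal (integral {\<alpha>..\<beta>} (\<lambda>t. norm (f' t)))"
    using \<open>(\<lambda>t. norm (f' t)) integrable_on {\<alpha>..\<beta>}\<close>
    by (intro nn_integral_has_integral_lebesgue) (auto intro: integrable_integral)
  ultimately show ?thesis
    unfolding f_def f'_def by (auto simp: indicator_mult_ennreal mult.commute intro: ennreal_leI)
qed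

lemma infdist_le_set_nn_integral_dist:
  fixes w :: "real \<Rightarrow> 'e::euclidean_space"
  assumes [measurable]: "w \<in> borel_measurable borel" "I \<in> sets borel"
    and I: "emeasure lborel I = 1"
    and AE_in: "AE x in lborel. x \<in> I \<longrightarrow> T x \<in> N"
    and close: "(\<integral>\<^sup>+ x\<in>I. ennreal ((dist (w x) (T x))\<^sup>2) \<partial>lborel) \<le> ennreal \<eta>"
  shows "ennreal (infdist c N) \<le> (\<integral>\<^sup>+ x\<in>I. ennreal (dist c (w x)) \<partial>lborel) + ennreal (sqrt \<eta>)"
proof -
  \<comment> \<open>T need not be measurable, so only the measurable excess h is integrated\<close>
  define h where "h x = max 0 (infdist c N - dist c (w x))" for x
  have [measurable]: "h \<in> borel_measurable borel"
    unfolding h_def[abs_def] by measurable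
  have "AE x in lborel. x \<in> I \<longrightarrow> h x \<le> dist (w x) (T x)"
    using AE_in
  proof eventually_elim
    case (elim x)
    show ?case
    proof
      assume "x \<in> I"
      then have "infdist c N \<le> dist c (T x)"
        using elim by (simp add: infdist_le)
      also have "\<dots> \<le> dist c (w x) + dist (w x) (T x)"
        by (rule dist_triangle)
      finally show "h x \<le> dist (w x) (T x)"
        by (simp add: h_def)
    qed
  qed
  then have "(\<integral>\<^sup>+ x. (ennreal (h x) * indicator I x)\<^sup>2 \<partial>lborel) \<le> (\<integral>\<^sup>+ x\<in>I. ennreal ((dist (w x) (T x))\<^sup>2) \<partial>lborel)"
    by (intro nn_integral_mono_AE, eventually_elim)
      (auto simp: ennreal_power h_def split: split_indicator intro!: ennreal_leI power_mono)
  then have "(\<integral>\<^sup>+ x\<in>I. ennreal (h x) \<partial>lborel)\<^sup>2 \<le> ennreal \<eta>"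
    using Cauchy_Schwarz_nn_integral[of "\<lambda>x. ennreal (h x) * indicator I x" lborel "indicator I"] close I
    by (simp add: power2_eq_square mult.assoc flip: indicator_inter_arith)
  then have excess: "(\<integral>\<^sup>+ x\<in>I. ennreal (h x) \<partial>lborel) \<le> ennreal (sqrt \<eta>)"
    by (rule power2_le_imp_le_ennreal_sqrt)
  have "ennreal (infdist c N) = (\<integral>\<^sup>+ x\<in>I. ennreal (infdist c N) \<partial>lborel)"
    using I by (simp add: nn_integral_cmult_indicator)
  also have "\<dots> \<le> (\<integral>\<^sup>+ x\<in>I. ennreal (dist c (w x)) + ennreal (h x) \<partial>lborel)"
    by (intro nn_integral_mono) (auto simp: h_def split: split_indicator simp flip: ennreal_plus intro!: ennreal_leI)
  also have "\<dots> = (\<integral>\<^sup>+ x\<in>I. ennreal (dist c (w x)) \<partial>lborel) + (\<integral>\<^sup>+ x\<in>I. ennreal (h x) \<partial>lborel)"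
    by (simp add: distrib_right nn_integral_add)
  also have "\<dots> \<le> (\<integral>\<^sup>+ x\<in>I. ennreal (dist c (w x)) \<partial>lborel) + ennreal (sqrt \<eta>)"
    using excess by (rule add_left_mono)
  finally show ?thesis .
qed

section \<open>The half ball\<close>

lemma half_ball_iff: "(x, y) \<in> half_ball \<longleftrightarrow> x\<^sup>2 + y\<^sup>2 < 1 \<and> 0 < y"
  by (simp add: half_ball_def)

lemma open_half_ball: "open half_ball"
proof -
  have "half_ball = {p. (fst p)\<^sup>2 + (snd p)\<^sup>2 < 1} \<inter> {p. snd p > 0}"
    by (auto simp: half_ball_def)
  also have "open \<dots>"
    by (intro open_Int open_Collect_less continuous_intros)
  finally show ?thesis .
qed

lemma half_ball_sets [measurable]: "half_ball \<in> sets borel"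
  using open_half_ball by auto

lemma half_ball_bounds:
  assumes "p \<in> half_ball"
  shows "0 < snd p" "snd p < 1" "-1 < fst p" "fst p < 1"
proof -
  have "(fst p)\<^sup>2 < 1" "(snd p)\<^sup>2 < 1" "0 < snd p"
    using assms by (auto simp: half_ball_def) (smt (verit) zero_le_power2)+
  then show "0 < snd p" "snd p < 1" "-1 < fst p" "fst p < 1"
    by (auto simp: abs_square_less_1 abs_less_iff)
qed

lemma half_ball_subset_cball: "half_ball \<subseteq> cball 0 1"
proof
  fix p :: "real \<times> real"
  assume "p \<in> half_ball"
  then have "(fst p)\<^sup>2 + (snd p)\<^sup>2 < 1"
    by (simp add: half_ball_def)
  then show "p \<in> cball 0 1"
    by (cases p) (simp add: norm_Pair)
qed

lemma half_ball_below:
  assumes "(x', y') \<in> half_ball" "\<bar>x\<bar> \<le> \<bar>x'\<bar>" "0 < y" "y \<le> y'"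
  shows "(x, y) \<in> half_ball"
proof -
  have "x\<^sup>2 \<le> x'\<^sup>2"
    using assms(2) abs_le_square_iff by blast
  moreover have "y\<^sup>2 \<le> y'\<^sup>2"
    using assms(3,4) by (intro power_mono) auto
  ultimately show ?thesis
    using assms(1,3) unfolding half_ball_iff by linarith
qed

lemma half_ball_central:
  assumes "\<bar>x\<bar> < 1/2" "0 < y" "y < 1/2"
  shows "(x, y) \<in> half_ball"
proof -
  have "\<bar>x\<bar>\<^sup>2 < (1/2)\<^sup>2" "y\<^sup>2 < (1/2)\<^sup>2"
    using assms by (intro power_strict_mono; simp)+
  then show ?thesis
    using assms by (simp add: half_ball_iff power2_eq_square)
qed

lemma emeasure_half_ball: "emeasure lborel half_ball = ennreal (pi / 2)"
proof -
  define lower where "lower = {p::real \<times> real. (fst p)\<^sup>2 + (snd p)\<^sup>2 < 1 \<and> snd p < 0}"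
  define axis where "axis = (UNIV::real set) \<times> {0::real}"
  have [measurable]: "lower \<in> sets borel"
    unfolding lower_def by (intro borel_open open_Collect_conj open_Collect_less continuous_intros)
  have [measurable]: "axis \<in> sets borel"
    unfolding axis_def by (intro borel_closed closed_Times) auto
  have "emeasure (lborel \<Otimes>\<^sub>M lborel) axis = emeasure lborel (UNIV::real set) * emeasure lborel {0::real}"
    unfolding axis_def by (rule lborel.emeasure_pair_measure_Times) auto
  then have axis_null: "emeasure lborel axis = 0"
    by (simp add: lborel_prod)
  \<comment> \<open>reflection in the axis, one vertical line at a time\<close>
  have reflect: "emeasure lborel lower = emeasure lborel half_ball"
  proof -
    have "(\<integral>\<^sup>+ y. indicator half_ball (x, y) \<partial>lborel) = (\<integral>\<^sup>+ y. indicator lower (x, y) \<partial>lborel)" for x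
      using nn_integral_real_affine[of "\<lambda>y. indicator half_ball (x, y)" "-1" 0]
      by (simp add: indicator_def half_ball_def lower_def)
    then show ?thesis
      using nn_integral_lborel_fst[of "indicator lower"] nn_integral_lborel_fst[of "indicator half_ball"]
      by simp
  qed
  have "AE p in lborel. indicator (ball 0 1) p = (indicator half_ball p + indicator lower p + indicator axis p :: ennreal)"
  proof -
    have "AE p in lborel. p \<notin> axis"
      using axis_null by (intro AE_not_in) auto
    then show ?thesis
      by eventually_elim (auto simp: dist_norm norm_Pair half_ball_def lower_def axis_def indicator_def linorder_neq_iff)
  qed
  then have "emeasure lborel (ball (0::real \<times> real) 1)
      = (\<integral>\<^sup>+ p. indicator half_ball p + indicator lower p + indicator axis p \<partial>lborel)"
    by (subst nn_integral_indicator[symmetric]) (simp_all add: nn_integral_cong_AE)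
  also have "\<dots> = emeasure lborel half_ball + emeasure lborel lower + emeasure lborel axis"
    by (simp add: nn_integral_add)
  finally have pi_eq: "ennreal pi = 2 * emeasure lborel half_ball"
    using emeasure_ball[of 1 "0::real \<times> real"] reflect axis_null by (simp add: unit_ball_vol_2 mult_2)
  then show ?thesis
  proof (cases "emeasure lborel half_ball" rule: ennreal_cases)
    case (real r)
    then have "ennreal pi = ennreal (2 * r)"
      using pi_eq by (simp add: ennreal_mult)
    then show ?thesis
      using real by (simp add: ennreal_inj)
  qed simp
qed

lemma set_integral_half_ball_const:
  fixes c :: "'e::euclidean_space"
  shows "(LINT p:half_ball|lborel. c) = (pi / 2) *\<^sub>R c"
  using set_integral_const[of half_ball lborel c] emeasure_half_ball by (simp add: measure_def)

lemma continuous_set_integrable_half_ball: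
  fixes f :: "real \<times> real \<Rightarrow> 'e::euclidean_space"
  assumes "continuous_on UNIV f"
  shows "set_integrable lborel half_ball f"
proof -
  have "set_integrable lborel (cball 0 1) f"
    unfolding set_integrable_def
    by (rule borel_integrable_compact) (auto intro: continuous_on_subset[OF assms])
  then show ?thesis
    by (rule set_integrable_subset) (auto simp: half_ball_subset_cball)
qed

lemma nn_integral_half_ball_powr_neg:
  assumes "a < 1"
  shows "(\<integral>\<^sup>+ p\<in>half_ball. ennreal (snd p powr (-a)) \<partial>lborel) \<le> ennreal (2 / (1 - a))"
proof -
  have "((\<lambda>y. y powr (-a)) has_integral 1 / (1 - a)) {0..1}"
    using has_integral_powr_from_0[of "-a" 1] assms by simp
  then have column: "(\<integral>\<^sup>+ y. ennreal (indicator {0..1} y * y powr (-a)) \<partial>lborel) = ennreal (1 / (1 - a))"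
    by (subst nn_integral_has_integral_lebesgue) auto
  have "(\<integral>\<^sup>+ p\<in>half_ball. ennreal (snd p powr (-a)) \<partial>lborel)
      \<le> (\<integral>\<^sup>+ p. ennreal (indicator {0..1} (snd p) * snd p powr (-a)) * indicator {-1<..<1::real} (fst p) \<partial>lborel)"
    by (intro nn_integral_mono) (auto simp: indicator_def dest: half_ball_bounds)
  also have "\<dots> = (\<integral>\<^sup>+ x. \<integral>\<^sup>+ y. ennreal (indicator {0..1} y * y powr (-a)) * indicator {-1<..<1::real} x \<partial>lborel \<partial>lborel)"
  proof -
    have "(\<lambda>p. ennreal (indicator {0..1} (snd p) * snd p powr (-a)) * indicator {-1<..<1::real} (fst p))
        \<in> borel_measurable borel"
      by measurable
    from nn_integral_lborel_fst[OF this] show ?thesis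
      by simp
  qed
  also have "\<dots> = (\<integral>\<^sup>+ x. ennreal (1 / (1 - a)) * indicator {-1<..<1::real} x \<partial>lborel)"
    by (simp add: nn_integral_multc column)
  also have "\<dots> = ennreal (2 / (1 - a))"
  proof -
    have "ennreal (2 / (1 - a)) = ennreal (1 / (1 - a)) * ennreal 2"
      using assms by (subst ennreal_mult[symmetric]) auto
    then show ?thesis
      by (simp add: nn_integral_cmult_indicator)
  qed
  finally show ?thesis .
qed

lemma half_ball_weighted_Cauchy_Schwarz:
  fixes f :: "real \<times> real \<Rightarrow> ennreal"
  assumes f [measurable]: "f \<in> borel_measurable borel" and "a < 1"
  shows "(\<integral>\<^sup>+ p\<in>half_ball. f p \<partial>lborel)\<^sup>2
    \<le> ennreal (2 / (1 - a)) * (\<integral>\<^sup>+ p\<in>half_ball. ennreal (snd p powr a) * (f p)\<^sup>2 \<partial>lborel)"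
proof -
  define F where "F p = ennreal (snd p powr (a / 2)) * f p * indicator half_ball p" for p
  define G where "G p = ennreal (snd p powr (- a / 2)) * indicator half_ball p" for p
  have [measurable]: "F \<in> borel_measurable borel" "G \<in> borel_measurable borel"
    unfolding F_def[abs_def] G_def[abs_def] by measurable
  have split: "f p * indicator half_ball p = F p * G p" for p
  proof (cases "p \<in> half_ball")
    case True
    then have "snd p powr (a / 2) * snd p powr (- a / 2) = 1"
      using half_ball_bounds[OF True] by (simp flip: powr_add)
    then show ?thesis
      using True by (simp add: F_def G_def mult_ac flip: ennreal_mult)
  qed (simp add: F_def G_def)
  have half_sq: "(ennreal (snd p powr (b / 2)))\<^sup>2 = ennreal (snd p powr b)" for b p
    by (simp add: power2_eq_square flip: ennreal_mult powr_add)
  have "(\<integral>\<^sup>+ p\<in>half_ball. f p \<partial>lborel)\<^sup>2 \<le> (\<integral>\<^sup>+ p. (F p)\<^sup>2 \<partial>lborel) * (\<integral>\<^sup>+ p. (G p)\<^sup>2 \<partial>lborel)"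
    unfolding split by (rule Cauchy_Schwarz_nn_integral) measurable
  also have "(\<integral>\<^sup>+ p. (G p)\<^sup>2 \<partial>lborel) = (\<integral>\<^sup>+ p\<in>half_ball. ennreal (snd p powr (-a)) \<partial>lborel)"
    unfolding G_def power_mult_distrib half_sq by (intro nn_integral_cong) (simp split: split_indicator)
  also have "(\<integral>\<^sup>+ p. (F p)\<^sup>2 \<partial>lborel) = (\<integral>\<^sup>+ p\<in>half_ball. ennreal (snd p powr a) * (f p)\<^sup>2 \<partial>lborel)"
    unfolding F_def power_mult_distrib half_sq by (intro nn_integral_cong) (simp add: mult_ac split: split_indicator)
  also have "(\<integral>\<^sup>+ p\<in>half_ball. ennreal (snd p powr a) * (f p)\<^sup>2 \<partial>lborel) * (\<integral>\<^sup>+ p\<in>half_ball. ennreal (snd p powr (-a)) \<partial>lborel)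
      \<le> (\<integral>\<^sup>+ p\<in>half_ball. ennreal (snd p powr a) * (f p)\<^sup>2 \<partial>lborel) * ennreal (2 / (1 - a))"
    using nn_integral_half_ball_powr_neg[OF \<open>a < 1\<close>] by (rule mult_left_mono) simp
  finally show ?thesis
    by (simp add: mult.commute)
qed

lemma half_ball_L1_le_weighted_L2:
  fixes f :: "real \<times> real \<Rightarrow> real"
  assumes [measurable]: "f \<in> borel_measurable borel" and "a < 1" and "0 \<le> c"
    and weighted: "(\<integral>\<^sup>+ p\<in>half_ball. ennreal (snd p powr a * (f p)\<^sup>2) \<partial>lborel) \<le> ennreal c"
  shows "(\<integral>\<^sup>+ p\<in>half_ball. ennreal (f p) \<partial>lborel) \<le> ennreal (sqrt (2 / (1 - a) * c))"
proof (rule power2_le_imp_le_ennreal_sqrt)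
  have "ennreal (snd p powr a) * (ennreal (f p))\<^sup>2 \<le> ennreal (snd p powr a * (f p)\<^sup>2)" for p
    by (cases "0 \<le> f p") (simp_all add: ennreal_power ennreal_mult ennreal_neg)
  then have "(\<integral>\<^sup>+ p\<in>half_ball. ennreal (snd p powr a) * (ennreal (f p))\<^sup>2 \<partial>lborel) \<le> ennreal c"
    by (intro order_trans[OF nn_integral_mono weighted]) (simp add: mult_right_mono)
  then have "ennreal (2 / (1 - a)) * (\<integral>\<^sup>+ p\<in>half_ball. ennreal (snd p powr a) * (ennreal (f p))\<^sup>2 \<partial>lborel)
      \<le> ennreal (2 / (1 - a)) * ennreal c"
    by (rule mult_left_mono) simp
  also have "\<dots> = ennreal (2 / (1 - a) * c)"
    using \<open>a < 1\<close> \<open>0 \<le> c\<close> by (subst ennreal_mult[symmetric]) auto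
  finally show "(\<integral>\<^sup>+ p\<in>half_ball. ennreal (f p) \<partial>lborel)\<^sup>2 \<le> ennreal (2 / (1 - a) * c)"
    using half_ball_weighted_Cauchy_Schwarz[of "\<lambda>p. ennreal (f p)" a] \<open>a < 1\<close>
    by (simp add: order_trans)
qed

lemma half_ball_L1_sum_le_weighted_L2:
  fixes f g :: "real \<times> real \<Rightarrow> 'e::euclidean_space"
  assumes [measurable]: "f \<in> borel_measurable borel" "g \<in> borel_measurable borel"
    and "a < 1" and "0 \<le> c"
    and weighted: "(\<integral>\<^sup>+ p\<in>half_ball. ennreal (snd p powr a * ((norm (f p))\<^sup>2 + (norm (g p))\<^sup>2)) \<partial>lborel) \<le> ennreal c"
  shows "(\<integral>\<^sup>+ p\<in>half_ball. ennreal (norm (f p) + norm (g p)) \<partial>lborel) \<le> ennreal (sqrt (2 / (1 - a) * (2 * c)))"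
proof (rule half_ball_L1_le_weighted_L2)
  have "(\<integral>\<^sup>+ p\<in>half_ball. ennreal (snd p powr a * (norm (f p) + norm (g p))\<^sup>2) \<partial>lborel)
      \<le> (\<integral>\<^sup>+ p\<in>half_ball. 2 * ennreal (snd p powr a * ((norm (f p))\<^sup>2 + (norm (g p))\<^sup>2)) \<partial>lborel)"
  proof (intro nn_integral_mono mult_right_mono)
    fix p :: "real \<times> real"
    have "snd p powr a * (norm (f p) + norm (g p))\<^sup>2 \<le> 2 * (snd p powr a * ((norm (f p))\<^sup>2 + (norm (g p))\<^sup>2))"
      using mult_left_mono[OF power2_add_le, of "snd p powr a" "norm (f p)" "norm (g p)"] by (simp add: algebra_simps)
    then have "ennreal (snd p powr a * (norm (f p) + norm (g p))\<^sup>2)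
        \<le> ennreal (2 * (snd p powr a * ((norm (f p))\<^sup>2 + (norm (g p))\<^sup>2)))"
      by (rule ennreal_leI)
    then show "ennreal (snd p powr a * (norm (f p) + norm (g p))\<^sup>2)
        \<le> 2 * ennreal (snd p powr a * ((norm (f p))\<^sup>2 + (norm (g p))\<^sup>2))"
      by (simp add: ennreal_mult)
  qed simp
  also have "\<dots> \<le> 2 * ennreal c"
    using weighted by (simp add: mult.assoc nn_integral_cmult mult_left_mono)
  also have "\<dots> = ennreal (2 * c)"
    using \<open>0 \<le> c\<close> by (simp add: ennreal_mult)
  finally show "(\<integral>\<^sup>+ p\<in>half_ball. ennreal (snd p powr a * (norm (f p) + norm (g p))\<^sup>2) \<partial>lborel) \<le> ennreal (2 * c)" .
qed (use assms in simp_all)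

lemma set_integrable_half_ball_if_weighted_L2:
  fixes v :: "real \<times> real \<Rightarrow> 'e::euclidean_space"
  assumes [measurable]: "v \<in> borel_measurable borel" and "a < 1"
    and finite: "(\<integral>\<^sup>+ p\<in>half_ball. ennreal (snd p powr a * (norm (v p))\<^sup>2) \<partial>lborel) < \<infinity>"
  shows "set_integrable lborel half_ball v"
  unfolding set_integrable_def
proof (rule integrableI_bounded)
  have "(\<integral>\<^sup>+ p. ennreal (norm (indicator half_ball p *\<^sub>R v p)) \<partial>lborel)
      = (\<integral>\<^sup>+ p\<in>half_ball. ennreal (norm (v p)) \<partial>lborel)"
    by (intro nn_integral_cong) (simp split: split_indicator)
  also have "\<dots> \<le> ennreal (sqrt (2 / (1 - a) * enn2real (\<integral>\<^sup>+ p\<in>half_ball. ennreal (snd p powr a * (norm (v p))\<^sup>2) \<partial>lborel)))"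
    using \<open>a < 1\<close> finite by (intro half_ball_L1_le_weighted_L2) simp_all
  also have "\<dots> < \<infinity>"
    by simp
  finally show "(\<integral>\<^sup>+ p. ennreal (norm (indicator half_ball p *\<^sub>R v p)) \<partial>lborel) < \<infinity>" .
qed simp

definition half_ball_mean :: "(real \<times> real \<Rightarrow> 'e::euclidean_space) \<Rightarrow> 'e" where
  "half_ball_mean f = (2 / pi) *\<^sub>R (LINT p:half_ball|lborel. f p)"

lemma half_ball_mean_const [simp]: "half_ball_mean (\<lambda>_. c) = c"
  by (simp add: half_ball_mean_def set_integral_half_ball_const)

lemma norm_half_ball_mean_diff_le:
  assumes "set_integrable lborel half_ball f" "set_integrable lborel half_ball g"
  shows "ennreal (norm (half_ball_mean f - half_ball_mean g)) \<le> (\<integral>\<^sup>+ p\<in>half_ball. ennreal (norm (f p - g p)) \<partial>lborel)"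
proof -
  have integrable: "integrable lborel (\<lambda>p. indicator half_ball p *\<^sub>R (f p - g p))"
    using set_integral_diff(1)[OF assms] by (simp add: set_integrable_def)
  have "half_ball_mean f - half_ball_mean g = (2 / pi) *\<^sub>R (LINT p:half_ball|lborel. f p - g p)"
    by (simp add: half_ball_mean_def set_integral_diff(2)[OF assms] scaleR_diff_right)
  then have "norm (half_ball_mean f - half_ball_mean g) = (2 / pi) * norm (LINT p:half_ball|lborel. f p - g p)"
    by simp
  also have "\<dots> \<le> norm (LINT p:half_ball|lborel. f p - g p)"
    using pi_ge_two by (intro mult_left_le_one_le) auto
  also have "ennreal \<dots> \<le> (\<integral>\<^sup>+ p. ennreal (norm (indicator half_ball p *\<^sub>R (f p - g p))) \<partial>lborel)"
    unfolding set_lebesgue_integral_def by (rule integral_norm_bound_ennreal[OF integrable])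
  also have "\<dots> = (\<integral>\<^sup>+ p\<in>half_ball. ennreal (norm (f p - g p)) \<partial>lborel)"
    by (intro nn_integral_cong) (simp split: split_indicator)
  finally show ?thesis
    by (simp add: ennreal_leI)
qed

lemma half_ball_mean_cong:
  "(\<And>p. p \<in> half_ball \<Longrightarrow> f p = g p) \<Longrightarrow> half_ball_mean f = half_ball_mean g"
  unfolding half_ball_mean_def by (simp add: set_lebesgue_integral_cong)

lemma energy_s_cong:
  assumes "\<And>p. p \<in> half_ball \<Longrightarrow> g1 p = g1' p" "\<And>p. p \<in> half_ball \<Longrightarrow> g2 p = g2' p"
  shows "energy_s a g1 g2 = energy_s a g1' g2'"
  unfolding energy_s_def using assms by (simp add: set_lebesgue_integral_cong)

lemma has_trace_cong:
  assumes "\<And>p. p \<in> half_ball \<Longrightarrow> v p = v' p"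
    and "\<And>p. p \<in> half_ball \<Longrightarrow> g1 p = g1' p" "\<And>p. p \<in> half_ball \<Longrightarrow> g2 p = g2' p"
  shows "has_trace a v g1 g2 T = has_trace a v' g1' g2' T"
proof -
  have "(\<integral>\<^sup>+ p\<in>half_ball. ennreal (snd p powr a * ((norm (w p - v p))\<^sup>2 + (norm (dx w p - g1 p))\<^sup>2 + (norm (dy w p - g2 p))\<^sup>2)) \<partial>lborel)
      = (\<integral>\<^sup>+ p\<in>half_ball. ennreal (snd p powr a * ((norm (w p - v' p))\<^sup>2 + (norm (dx w p - g1' p))\<^sup>2 + (norm (dy w p - g2' p))\<^sup>2)) \<partial>lborel)"
    for w :: "real \<times> real \<Rightarrow> 'a"
    using assms by (intro nn_integral_cong) (simp split: split_indicator)
  then show ?thesis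
    unfolding has_trace_def by simp
qed

lemma nn_integral_half_ball_energy:
  fixes g1 g2 :: "real \<times> real \<Rightarrow> 'e::euclidean_space"
  assumes [measurable]: "g1 \<in> borel_measurable borel" "g2 \<in> borel_measurable borel"
    and "(\<integral>\<^sup>+ p\<in>half_ball. ennreal (snd p powr a * ((norm (g1 p))\<^sup>2 + (norm (g2 p))\<^sup>2)) \<partial>lborel) < \<infinity>"
  shows "(\<integral>\<^sup>+ p\<in>half_ball. ennreal (snd p powr a * ((norm (g1 p))\<^sup>2 + (norm (g2 p))\<^sup>2)) \<partial>lborel)
    = ennreal (2 * energy_s a g1 g2)"
  using assms by (subst set_nn_integral_eq_set_integral) (simp_all add: energy_s_def)

section \<open>A trace estimate for C1 functions\<close>

locale c1_function =
  fixes u :: "real \<times> real \<Rightarrow> 'e::euclidean_space"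
  assumes differentiable: "\<And>p. u differentiable (at p)"
    and continuous_dx: "continuous_on UNIV (dx u)"
    and continuous_dy: "continuous_on UNIV (dy u)"
begin

lemma has_derivative: "(u has_derivative frechet_derivative u (at p)) (at p)"
  using differentiable frechet_derivative_works by blast

lemma continuous: "continuous_on UNIV u"
  using has_derivative by (intro continuous_at_imp_continuous_on ballI) (blast intro: has_derivative_continuous)

lemma borel_measurable [measurable]: "u \<in> borel_measurable borel"
  using continuous by (rule borel_measurable_continuous_onI)

lemma borel_measurable_dx [measurable]: "dx u \<in> borel_measurable borel"
  using continuous_dx by (rule borel_measurable_continuous_onI)

lemma borel_measurable_dy [measurable]: "dy u \<in> borel_measurable borel"
  using continuous_dy by (rule borel_measurable_continuous_onI)

lemma norm_diff_vertical:
  "\<alpha> \<le> \<beta> \<Longrightarrow> ennreal (norm (u (z, \<beta>) - u (z, \<alpha>))) \<le> (\<integral>\<^sup>+ t\<in>{\<alpha>..\<beta>}. ennreal (norm (dy u (z, t))) \<partial>lborel)"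
  using norm_diff_le_nn_integral_directional_derivative[OF has_derivative, of "(0, 1)" \<alpha> \<beta> "(z, 0)"]
    continuous_dy by (simp add: dy_def[abs_def])

lemma norm_diff_horizontal:
  "\<alpha> \<le> \<beta> \<Longrightarrow> ennreal (norm (u (\<beta>, t) - u (\<alpha>, t))) \<le> (\<integral>\<^sup>+ \<xi>\<in>{\<alpha>..\<beta>}. ennreal (norm (dx u (\<xi>, t))) \<partial>lborel)"
  using norm_diff_le_nn_integral_directional_derivative[OF has_derivative, of "(1, 0)" \<alpha> \<beta> "(0, t)"]
    continuous_dx by (simp add: dx_def[abs_def])

definition column_variation :: "real \<Rightarrow> ennreal" where
  "column_variation z = (\<integral>\<^sup>+ t. ennreal (norm (dy u (z, t))) * indicator half_ball (z, t) \<partial>lborel)"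

definition row_variation :: "real \<Rightarrow> ennreal" where
  "row_variation t = (\<integral>\<^sup>+ \<xi>. ennreal (norm (dx u (\<xi>, t))) * indicator half_ball (\<xi>, t) \<partial>lborel)"

lemma nn_integral_column_variation:
  "(\<integral>\<^sup>+ z. column_variation z \<partial>lborel) = (\<integral>\<^sup>+ p\<in>half_ball. ennreal (norm (dy u p)) \<partial>lborel)"
  unfolding column_variation_def by (rule nn_integral_lborel_fst) measurable

lemma nn_integral_row_variation:
  "(\<integral>\<^sup>+ t. row_variation t \<partial>lborel) = (\<integral>\<^sup>+ p\<in>half_ball. ennreal (norm (dx u p)) \<partial>lborel)"
  unfolding row_variation_def by (rule nn_integral_lborel_snd) measurable

lemma borel_measurable_column_variation [measurable]: "column_variation \<in> borel_measurable borel"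
proof -
  have "(\<lambda>(z, t). ennreal (norm (dy u (z, t))) * indicator half_ball (z, t)) \<in> borel_measurable (lborel \<Otimes>\<^sub>M lborel)"
    unfolding lborel_prod by (simp add: case_prod_beta')
  from lborel.borel_measurable_nn_integral[OF this] show ?thesis
    unfolding column_variation_def[abs_def] by simp
qed

lemma borel_measurable_row_variation [measurable]: "row_variation \<in> borel_measurable borel"
proof -
  have "(\<lambda>(t, \<xi>). ennreal (norm (dx u (\<xi>, t))) * indicator half_ball (\<xi>, t)) \<in> borel_measurable (lborel \<Otimes>\<^sub>M lborel)"
    unfolding lborel_prod by (simp add: case_prod_beta')
  from lborel.borel_measurable_nn_integral[OF this] show ?thesis
    unfolding row_variation_def[abs_def] by simp
qed

lemma norm_diff_le_variations:
  assumes p: "(x', y) \<in> half_ball" and x: "\<bar>x\<bar> < 1/2"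
  shows "ennreal (norm (u (x', y) - u (x, 0))) \<le> column_variation x' + row_variation (y / 2) + column_variation x"
proof -
  have y: "0 < y" "y < 1"
    using half_ball_bounds[OF p] by simp_all
  have down: "ennreal (norm (u (x', y) - u (x', y / 2))) \<le> column_variation x'"
  proof -
    have "ennreal (norm (u (x', y) - u (x', y / 2))) \<le> (\<integral>\<^sup>+ t\<in>{y / 2..y}. ennreal (norm (dy u (x', t))) \<partial>lborel)"
      using norm_diff_vertical[of "y / 2" y x'] y by simp
    also have "\<dots> \<le> column_variation x'"
      unfolding column_variation_def
      using half_ball_below[OF p, of x'] y by (intro nn_integral_mono) (auto split: split_indicator)
    finally show ?thesis .
  qed
  have across: "ennreal (norm (u (x', y / 2) - u (x, y / 2))) \<le> row_variation (y / 2)"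
  proof -
    have segment: "(\<xi>, y / 2) \<in> half_ball" if "min x x' \<le> \<xi>" "\<xi> \<le> max x x'" for \<xi>
    proof (cases "\<bar>\<xi>\<bar> \<le> \<bar>x'\<bar>")
      case True
      then show ?thesis
        using half_ball_below[OF p True] y by simp
    next
      case False
      then have "\<bar>\<xi>\<bar> < 1/2"
        using that x by (auto simp: abs_less_iff)
      then show ?thesis
        using half_ball_central[of \<xi> "y / 2"] y by simp
    qed
    have "ennreal (norm (u (x', y / 2) - u (x, y / 2)))
        \<le> (\<integral>\<^sup>+ \<xi>\<in>{min x x'..max x x'}. ennreal (norm (dx u (\<xi>, y / 2))) \<partial>lborel)"
      using norm_diff_horizontal[of "min x x'" "max x x'" "y / 2"]
      by (cases "x \<le> x'") (auto simp: norm_minus_commute min_def max_def)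
    also have "\<dots> \<le> row_variation (y / 2)"
      unfolding row_variation_def using segment by (intro nn_integral_mono) (auto split: split_indicator)
    finally show ?thesis .
  qed
  have up: "ennreal (norm (u (x, y / 2) - u (x, 0))) \<le> column_variation x"
  proof -
    have central: "(x, t) \<in> half_ball" if "0 \<le> t" "t \<noteq> 0" "t \<le> y / 2" for t
      using half_ball_central[OF x, of t] that y by simp
    have "ennreal (norm (u (x, y / 2) - u (x, 0))) \<le> (\<integral>\<^sup>+ t\<in>{0..y / 2}. ennreal (norm (dy u (x, t))) \<partial>lborel)"
      using norm_diff_vertical[of 0 "y / 2" x] y by simp
    also have "\<dots> \<le> column_variation x"
      unfolding column_variation_def
      using AE_lborel_singleton[of 0]
      by (intro nn_integral_mono_AE, eventually_elim) (auto simp: central split: split_indicator)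
    finally show ?thesis .
  qed
  have "norm (u (x', y) - u (x, 0))
      \<le> norm (u (x', y) - u (x', y / 2)) + norm (u (x', y / 2) - u (x, y / 2)) + norm (u (x, y / 2) - u (x, 0))"
    by (smt (verit) norm_triangle_ineq diff_add_cancel add_diff_eq)
  then have "ennreal (norm (u (x', y) - u (x, 0)))
      \<le> ennreal (norm (u (x', y) - u (x', y / 2))) + ennreal (norm (u (x', y / 2) - u (x, y / 2)))
        + ennreal (norm (u (x, y / 2) - u (x, 0)))"
    by (simp add: ennreal_plus[symmetric] del: ennreal_plus)
  also have "\<dots> \<le> column_variation x' + row_variation (y / 2) + column_variation x"
    using down across up by (intro add_mono)
  finally show ?thesis .
qed

lemma norm_half_ball_mean_diff_le_variations:
  assumes "\<bar>x\<bar> < 1/2"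
  shows "ennreal (norm (half_ball_mean u - u (x, 0)))
    \<le> (\<integral>\<^sup>+ p\<in>half_ball. column_variation (fst p) \<partial>lborel)
      + (\<integral>\<^sup>+ p\<in>half_ball. row_variation (snd p / 2) \<partial>lborel) + column_variation x * ennreal (pi / 2)"
proof -
  have "ennreal (norm (half_ball_mean u - u (x, 0))) \<le> (\<integral>\<^sup>+ p\<in>half_ball. ennreal (norm (u p - u (x, 0))) \<partial>lborel)"
    using norm_half_ball_mean_diff_le[of u "\<lambda>_. u (x, 0)"]
    by (simp add: continuous_set_integrable_half_ball continuous)
  also have "\<dots> \<le> (\<integral>\<^sup>+ p\<in>half_ball. column_variation (fst p) + row_variation (snd p / 2) + column_variation x \<partial>lborel)"
    using norm_diff_le_variations[OF _ assms] by (intro nn_integral_mono) (auto split: split_indicator)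
  also have "\<dots> = (\<integral>\<^sup>+ p\<in>half_ball. column_variation (fst p) \<partial>lborel)
      + (\<integral>\<^sup>+ p\<in>half_ball. row_variation (snd p / 2) \<partial>lborel) + column_variation x * ennreal (pi / 2)"
    by (simp add: distrib_right nn_integral_add nn_integral_cmult_indicator emeasure_half_ball)
  finally show ?thesis .
qed

lemma nn_integral_column_variation_le:
  "(\<integral>\<^sup>+ p\<in>half_ball. column_variation (fst p) \<partial>lborel) \<le> (\<integral>\<^sup>+ p\<in>half_ball. ennreal (norm (dy u p)) \<partial>lborel)"
proof -
  have "(\<integral>\<^sup>+ p\<in>half_ball. column_variation (fst p) \<partial>lborel)
      \<le> (\<integral>\<^sup>+ p. column_variation (fst p) * indicator {0<..<1::real} (snd p) \<partial>lborel)"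
    by (intro nn_integral_mono) (auto split: split_indicator dest: half_ball_bounds)
  also have "\<dots> = (\<integral>\<^sup>+ z. column_variation z \<partial>lborel)"
  proof -
    have "(\<lambda>p. column_variation (fst p) * indicator {0<..<1::real} (snd p)) \<in> borel_measurable borel"
      by measurable
    from nn_integral_lborel_fst[OF this] show ?thesis
      by (simp add: nn_integral_cmult_indicator)
  qed
  finally show ?thesis
    by (simp add: nn_integral_column_variation)
qed

lemma nn_integral_row_variation_le:
  "(\<integral>\<^sup>+ p\<in>half_ball. row_variation (snd p / 2) \<partial>lborel) \<le> 4 * (\<integral>\<^sup>+ p\<in>half_ball. ennreal (norm (dx u p)) \<partial>lborel)"
proof -
  have rescale: "(\<integral>\<^sup>+ t. row_variation (t / 2) * indicator {0<..<1::real} t \<partial>lborel) \<le> 2 * (\<integral>\<^sup>+ s. row_variation s \<partial>lborel)"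
  proof -
    have "(\<integral>\<^sup>+ t. row_variation (t / 2) * indicator {0<..<1::real} t \<partial>lborel)
        = 2 * (\<integral>\<^sup>+ s. row_variation s * indicator {0<..<1::real} (2 * s) \<partial>lborel)"
      using nn_integral_real_affine[of "\<lambda>t. row_variation (t / 2) * indicator {0<..<1::real} t" 2 0] by simp
    also have "\<dots> \<le> 2 * (\<integral>\<^sup>+ s. row_variation s \<partial>lborel)"
      by (intro mult_left_mono nn_integral_mono) (simp_all split: split_indicator)
    finally show ?thesis .
  qed
  have "(\<integral>\<^sup>+ p\<in>half_ball. row_variation (snd p / 2) \<partial>lborel)
      \<le> (\<integral>\<^sup>+ p. row_variation (snd p / 2) * indicator {0<..<1::real} (snd p) * indicator {-1<..<1::real} (fst p) \<partial>lborel)"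
    by (intro nn_integral_mono) (auto split: split_indicator dest: half_ball_bounds)
  also have "\<dots> = (\<integral>\<^sup>+ t. \<integral>\<^sup>+ x. row_variation (t / 2) * indicator {0<..<1::real} t * indicator {-1<..<1::real} x \<partial>lborel \<partial>lborel)"
  proof -
    have "(\<lambda>p. row_variation (snd p / 2) * indicator {0<..<1::real} (snd p) * indicator {-1<..<1::real} (fst p))
        \<in> borel_measurable borel"
      by measurable
    from nn_integral_lborel_snd[OF this] show ?thesis
      by simp
  qed
  also have "\<dots> = (\<integral>\<^sup>+ t. row_variation (t / 2) * indicator {0<..<1::real} t \<partial>lborel) * 2"
    by (simp add: nn_integral_cmult_indicator nn_integral_multc)
  also have "\<dots> \<le> (2 * (\<integral>\<^sup>+ s. row_variation s \<partial>lborel)) * 2"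
    using rescale by (rule mult_right_mono) simp
  finally show ?thesis
    by (simp add: nn_integral_row_variation mult_ac)
qed

lemma trace_mean_oscillation:
  "(\<integral>\<^sup>+ x\<in>{-1/2<..<1/2}. ennreal (norm (half_ball_mean u - u (x, 0))) \<partial>lborel)
    \<le> 4 * (\<integral>\<^sup>+ p\<in>half_ball. ennreal (norm (dx u p) + norm (dy u p)) \<partial>lborel)"
proof -
  define Gx where "Gx = (\<integral>\<^sup>+ p\<in>half_ball. ennreal (norm (dx u p)) \<partial>lborel)"
  define Gy where "Gy = (\<integral>\<^sup>+ p\<in>half_ball. ennreal (norm (dy u p)) \<partial>lborel)"
  have "(\<integral>\<^sup>+ x\<in>{-1/2<..<1/2}. ennreal (norm (half_ball_mean u - u (x, 0))) \<partial>lborel)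
      \<le> (\<integral>\<^sup>+ x\<in>{-1/2<..<1/2::real}. (\<integral>\<^sup>+ p\<in>half_ball. column_variation (fst p) \<partial>lborel)
          + (\<integral>\<^sup>+ p\<in>half_ball. row_variation (snd p / 2) \<partial>lborel) + column_variation x * ennreal (pi / 2) \<partial>lborel)"
    using norm_half_ball_mean_diff_le_variations
    by (intro nn_integral_mono) (auto simp: abs_less_iff split: split_indicator)
  also have "\<dots> = (\<integral>\<^sup>+ p\<in>half_ball. column_variation (fst p) \<partial>lborel)
      + (\<integral>\<^sup>+ p\<in>half_ball. row_variation (snd p / 2) \<partial>lborel)
      + (\<integral>\<^sup>+ x\<in>{-1/2<..<1/2::real}. column_variation x \<partial>lborel) * ennreal (pi / 2)"
  proof -
    have "(\<integral>\<^sup>+ x\<in>{-1/2<..<1/2::real}. column_variation x * ennreal (pi / 2) \<partial>lborel)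
        = (\<integral>\<^sup>+ x\<in>{-1/2<..<1/2::real}. column_variation x \<partial>lborel) * ennreal (pi / 2)"
      using nn_integral_multc[of "\<lambda>x. column_variation x * indicator {-1/2<..<1/2::real} x" lborel "ennreal (pi / 2)"]
      by (simp add: mult_ac)
    then show ?thesis
      by (simp add: distrib_right nn_integral_add nn_integral_cmult_indicator)
  qed
  also have "\<dots> \<le> Gy + 4 * Gx + Gy * ennreal (pi / 2)"
  proof -
    have "(\<integral>\<^sup>+ x\<in>{-1/2<..<1/2::real}. column_variation x \<partial>lborel) \<le> Gy"
      unfolding Gy_def nn_integral_column_variation[symmetric]
      by (intro nn_integral_mono) (simp split: split_indicator)
    moreover have "(\<integral>\<^sup>+ p\<in>half_ball. column_variation (fst p) \<partial>lborel) \<le> Gy"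
      unfolding Gy_def by (rule nn_integral_column_variation_le)
    moreover have "(\<integral>\<^sup>+ p\<in>half_ball. row_variation (snd p / 2) \<partial>lborel) \<le> 4 * Gx"
      unfolding Gx_def by (rule nn_integral_row_variation_le)
    ultimately show ?thesis
      by (intro add_mono mult_right_mono) simp_all
  qed
  also have "\<dots> = 4 * Gx + (1 + ennreal (pi / 2)) * Gy"
    by (simp add: algebra_simps)
  also have "\<dots> \<le> 4 * Gx + 4 * Gy"
  proof -
    have "ennreal (1 + pi / 2) \<le> ennreal 4"
      using pi_less_4 by (intro ennreal_leI) simp
    then have "1 + ennreal (pi / 2) \<le> 4"
      by simp
    then show ?thesis
      by (intro add_left_mono mult_right_mono) simp_all
  qed
  also have "4 * Gx + 4 * Gy = 4 * (\<integral>\<^sup>+ p\<in>half_ball. ennreal (norm (dx u p) + norm (dy u p)) \<partial>lborel)"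
    unfolding Gx_def Gy_def
    by (simp add: distrib_left[symmetric] distrib_right nn_integral_add[symmetric] ennreal_plus)
  finally show ?thesis .
qed

end

lemma smooth_on_UNIV_imp_c1_function:
  fixes f :: "real \<times> real \<Rightarrow> 'e::euclidean_space"
  assumes "smooth_on UNIV f"
  shows "c1_function f"
proof -
  from assms have "Ck (Suc 0) UNIV f"
    unfolding smooth_on_def by blast
  then obtain f' where D: "\<And>p. (f has_derivative f' p) (at p)"
    and C: "\<And>i. i \<in> Basis \<Longrightarrow> continuous_on UNIV (\<lambda>p. f' p i)"
    by auto
  have f': "frechet_derivative f (at p) = f' p" for p
    using D by (rule frechet_derivative_at[symmetric])
  show ?thesis
  proof
    show "f differentiable (at p)" for p
      using D unfolding differentiable_def by blast
    show "continuous_on UNIV (dx f)"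
      using C[of "(1, 0)"] by (simp add: dx_def[abs_def] f' Basis_prod_def)
    show "continuous_on UNIV (dy f)"
      using C[of "(0, 1)"] by (simp add: dy_def[abs_def] f' Basis_prod_def)
  qed
qed

section \<open>Approximation by smooth functions\<close>

lemma (in c1_function) nn_integral_gradient_le:
  fixes g1 g2 :: "real \<times> real \<Rightarrow> 'e"
  assumes [measurable]: "g1 \<in> borel_measurable borel" "g2 \<in> borel_measurable borel"
    and "a < 1" and "0 \<le> \<eta>"
    and finite: "(\<integral>\<^sup>+ p\<in>half_ball. ennreal (snd p powr a * ((norm (g1 p))\<^sup>2 + (norm (g2 p))\<^sup>2)) \<partial>lborel) < \<infinity>"
    and close: "(\<integral>\<^sup>+ p\<in>half_ball. ennreal (snd p powr a * ((norm (dx u p - g1 p))\<^sup>2 + (norm (dy u p - g2 p))\<^sup>2)) \<partial>lborel)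
      \<le> ennreal \<eta>"
  shows "(\<integral>\<^sup>+ p\<in>half_ball. ennreal (norm (dx u p) + norm (dy u p)) \<partial>lborel)
    \<le> ennreal (2 * sqrt (2 / (1 - a) * energy_s a g1 g2)) + ennreal (sqrt (2 / (1 - a) * (2 * \<eta>)))"
proof -
  have "0 \<le> energy_s a g1 g2"
    unfolding energy_s_def set_lebesgue_integral_def by (simp add: integral_nonneg)
  have "(\<integral>\<^sup>+ p\<in>half_ball. ennreal (norm (dx u p) + norm (dy u p)) \<partial>lborel)
      \<le> (\<integral>\<^sup>+ p\<in>half_ball. ennreal (norm (g1 p) + norm (g2 p)) + ennreal (norm (dx u p - g1 p) + norm (dy u p - g2 p)) \<partial>lborel)"
  proof (intro nn_integral_mono mult_right_mono)
    fix p
    have "norm (dx u p) + norm (dy u p) \<le> norm (g1 p) + norm (g2 p) + (norm (dx u p - g1 p) + norm (dy u p - g2 p))"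
      using norm_triangle_sub[of "dx u p" "g1 p"] norm_triangle_sub[of "dy u p" "g2 p"] by simp
    then show "ennreal (norm (dx u p) + norm (dy u p))
        \<le> ennreal (norm (g1 p) + norm (g2 p)) + ennreal (norm (dx u p - g1 p) + norm (dy u p - g2 p))"
      by (simp flip: ennreal_plus add: ennreal_leI)
  qed simp
  also have "\<dots> = (\<integral>\<^sup>+ p\<in>half_ball. ennreal (norm (g1 p) + norm (g2 p)) \<partial>lborel)
      + (\<integral>\<^sup>+ p\<in>half_ball. ennreal (norm (dx u p - g1 p) + norm (dy u p - g2 p)) \<partial>lborel)"
    by (simp add: distrib_right nn_integral_add)
  also have "\<dots> \<le> ennreal (sqrt (2 / (1 - a) * (2 * (2 * energy_s a g1 g2)))) + ennreal (sqrt (2 / (1 - a) * (2 * \<eta>)))"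
    using assms \<open>0 \<le> energy_s a g1 g2\<close> nn_integral_half_ball_energy[of g1 g2 a]
    by (intro add_mono half_ball_L1_sum_le_weighted_L2) simp_all
  also have "sqrt (2 / (1 - a) * (2 * (2 * energy_s a g1 g2))) = 2 * sqrt (2 / (1 - a) * energy_s a g1 g2)"
  proof -
    have "2 / (1 - a) * (2 * (2 * energy_s a g1 g2)) = 2\<^sup>2 * (2 / (1 - a) * energy_s a g1 g2)"
      by (simp add: power2_eq_square)
    then show ?thesis
      unfolding real_sqrt_mult by simp
  qed
  finally show ?thesis .
qed

lemma infdist_half_ball_mean_le_approximation:
  fixes u v g1 g2 :: "real \<times> real \<Rightarrow> 'e::euclidean_space" and T :: "real \<Rightarrow> 'e"
  assumes u: "c1_function u" and a: "a < 1" and "0 \<le> \<eta>"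
    and [measurable]: "v \<in> borel_measurable borel" "g1 \<in> borel_measurable borel" "g2 \<in> borel_measurable borel"
    and finite: "(\<integral>\<^sup>+ p\<in>half_ball. ennreal (snd p powr a * ((norm (v p))\<^sup>2 + (norm (g1 p))\<^sup>2 + (norm (g2 p))\<^sup>2)) \<partial>lborel) < \<infinity>"
    and close: "(\<integral>\<^sup>+ p\<in>half_ball. ennreal (snd p powr a *
        ((norm (u p - v p))\<^sup>2 + (norm (dx u p - g1 p))\<^sup>2 + (norm (dy u p - g2 p))\<^sup>2)) \<partial>lborel) \<le> ennreal \<eta>"
    and trace_close: "(\<integral>\<^sup>+ x\<in>{-1<..<1}. ennreal ((norm (u (x, 0) - T x))\<^sup>2) \<partial>lborel) \<le> ennreal \<eta>"
    and AE_in: "AE x in lborel. x \<in> {-1<..<1} \<longrightarrow> T x \<in> N"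
  shows "infdist (half_ball_mean v) N
    \<le> 8 * sqrt (2 / (1 - a) * energy_s a g1 g2) + (sqrt (2 / (1 - a) * \<eta>) + 4 * sqrt (2 / (1 - a) * (2 * \<eta>)) + sqrt \<eta>)"
proof -
  interpret c1_function u by (rule u)
  define W where "W = 2 / (1 - a)"
  define E where "E = energy_s a g1 g2"
  define I where "I = {-1/2<..<1/2::real}"
  have "0 \<le> W"
    using a by (simp add: W_def)
  have "0 \<le> E"
    unfolding E_def energy_s_def set_lebesgue_integral_def by (simp add: integral_nonneg)
  have weight_mono: "ennreal (snd p powr a * r) * indicator half_ball p \<le> ennreal (snd p powr a * r') * indicator half_ball p"
    if "r \<le> r'" for p r r'
    using that by (intro mult_right_mono ennreal_leI mult_left_mono) simp_all
  have v_integrable: "set_integrable lborel half_ball v"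
  proof (rule set_integrable_half_ball_if_weighted_L2[OF _ a])
    show "(\<integral>\<^sup>+ p\<in>half_ball. ennreal (snd p powr a * (norm (v p))\<^sup>2) \<partial>lborel) < \<infinity>"
      by (rule le_less_trans[OF nn_integral_mono finite], rule weight_mono) simp
  qed simp
  have mean_close: "ennreal (norm (half_ball_mean v - half_ball_mean u)) \<le> ennreal (sqrt (W * \<eta>))"
  proof -
    have "ennreal (norm (half_ball_mean v - half_ball_mean u)) \<le> (\<integral>\<^sup>+ p\<in>half_ball. ennreal (norm (v p - u p)) \<partial>lborel)"
      by (rule norm_half_ball_mean_diff_le[OF v_integrable continuous_set_integrable_half_ball[OF continuous]])
    also have "\<dots> \<le> ennreal (sqrt (W * \<eta>))"
      unfolding W_def using a \<open>0 \<le> \<eta>\<close>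
      by (intro half_ball_L1_le_weighted_L2 order_trans[OF nn_integral_mono close] weight_mono)
        (simp_all add: norm_minus_commute)
    finally show ?thesis .
  qed
  have gradient: "(\<integral>\<^sup>+ p\<in>half_ball. ennreal (norm (dx u p) + norm (dy u p)) \<partial>lborel)
      \<le> ennreal (2 * sqrt (W * E)) + ennreal (sqrt (W * (2 * \<eta>)))"
    unfolding W_def E_def using a \<open>0 \<le> \<eta>\<close>
    by (intro nn_integral_gradient_le le_less_trans[OF nn_integral_mono finite]
        order_trans[OF nn_integral_mono close] weight_mono) simp_all
  have "(\<integral>\<^sup>+ x\<in>I. ennreal (dist (half_ball_mean v) (u (x, 0))) \<partial>lborel)
      \<le> (\<integral>\<^sup>+ x\<in>I. ennreal (norm (half_ball_mean v - half_ball_mean u)) + ennreal (norm (half_ball_mean u - u (x, 0))) \<partial>lborel)"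
  proof (intro nn_integral_mono mult_right_mono)
    fix x
    show "ennreal (dist (half_ball_mean v) (u (x, 0)))
        \<le> ennreal (norm (half_ball_mean v - half_ball_mean u)) + ennreal (norm (half_ball_mean u - u (x, 0)))"
      using norm_triangle_ineq[of "half_ball_mean v - half_ball_mean u" "half_ball_mean u - u (x, 0)"]
      by (simp flip: ennreal_plus add: dist_norm ennreal_leI)
  qed simp
  also have "\<dots> = ennreal (norm (half_ball_mean v - half_ball_mean u))
      + (\<integral>\<^sup>+ x\<in>I. ennreal (norm (half_ball_mean u - u (x, 0))) \<partial>lborel)"
    by (simp add: I_def distrib_right nn_integral_add nn_integral_cmult_indicator)
  also have "\<dots> \<le> ennreal (sqrt (W * \<eta>)) + 4 * (ennreal (2 * sqrt (W * E)) + ennreal (sqrt (W * (2 * \<eta>))))"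
    using mean_close order_trans[OF trace_mean_oscillation[unfolded I_def[symmetric]] mult_left_mono[OF gradient]]
    by (intro add_mono) simp_all
  finally have dist_bound: "(\<integral>\<^sup>+ x\<in>I. ennreal (dist (half_ball_mean v) (u (x, 0))) \<partial>lborel)
      \<le> ennreal (sqrt (W * \<eta>)) + 4 * (ennreal (2 * sqrt (W * E)) + ennreal (sqrt (W * (2 * \<eta>))))" .
  have "ennreal (infdist (half_ball_mean v) N)
      \<le> (\<integral>\<^sup>+ x\<in>I. ennreal (dist (half_ball_mean v) (u (x, 0))) \<partial>lborel) + ennreal (sqrt \<eta>)"
  proof (rule infdist_le_set_nn_integral_dist)
    show "AE x in lborel. x \<in> I \<longrightarrow> T x \<in> N"
      using AE_in by eventually_elim (simp add: I_def)
    show "(\<integral>\<^sup>+ x\<in>I. ennreal ((dist (u (x, 0)) (T x))\<^sup>2) \<partial>lborel) \<le> ennreal \<eta>"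
      by (rule order_trans[OF nn_integral_mono trace_close]) (auto simp: I_def dist_norm split: split_indicator)
  qed (simp_all add: I_def)
  also have "\<dots> \<le> ennreal (sqrt (W * \<eta>)) + 4 * (ennreal (2 * sqrt (W * E)) + ennreal (sqrt (W * (2 * \<eta>))))
      + ennreal (sqrt \<eta>)"
    using dist_bound by (rule add_right_mono)
  also have "\<dots> = ennreal (8 * sqrt (W * E) + (sqrt (W * \<eta>) + 4 * sqrt (W * (2 * \<eta>)) + sqrt \<eta>))"
    using \<open>0 \<le> W\<close> \<open>0 \<le> \<eta>\<close> \<open>0 \<le> E\<close> by (simp add: ennreal_mult algebra_simps)
  finally have "infdist (half_ball_mean v) N \<le> 8 * sqrt (W * E) + (sqrt (W * \<eta>) + 4 * sqrt (W * (2 * \<eta>)) + sqrt \<eta>)"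
    using \<open>0 \<le> W\<close> \<open>0 \<le> \<eta>\<close> \<open>0 \<le> E\<close> by (subst (asm) ennreal_le_iff) simp_all
  then show ?thesis
    by (simp add: W_def E_def)
qed

lemma infdist_half_ball_mean_le_energy_borel:
  fixes v g1 g2 :: "real \<times> real \<Rightarrow> 'e::euclidean_space" and T :: "real \<Rightarrow> 'e"
  assumes a: "a < 1"
    and [measurable]: "v \<in> borel_measurable borel" "g1 \<in> borel_measurable borel" "g2 \<in> borel_measurable borel"
    and finite: "(\<integral>\<^sup>+ p\<in>half_ball. ennreal (snd p powr a * ((norm (v p))\<^sup>2 + (norm (g1 p))\<^sup>2 + (norm (g2 p))\<^sup>2)) \<partial>lborel) < \<infinity>"
    and trace: "has_trace a v g1 g2 T"
    and AE_in: "AE x in lborel. x \<in> {-1<..<1} \<longrightarrow> T x \<in> N"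
  shows "infdist (half_ball_mean v) N \<le> 8 * sqrt (2 / (1 - a)) * sqrt (energy_s a g1 g2)"
proof -
  define W where "W = 2 / (1 - a)"
  define K where "K = sqrt W + 4 * sqrt (W * 2) + 1"
  have "0 \<le> W"
    using a by (simp add: W_def)
  then have "0 < K"
    by (simp add: K_def add_nonneg_pos)
  obtain u :: "nat \<Rightarrow> real \<times> real \<Rightarrow> 'e" where smooth: "\<And>n. smooth_on UNIV (u n)"
    and approx: "(\<lambda>n. \<integral>\<^sup>+ p\<in>half_ball. ennreal (snd p powr a *
        ((norm (u n p - v p))\<^sup>2 + (norm (dx (u n) p - g1 p))\<^sup>2 + (norm (dy (u n) p - g2 p))\<^sup>2)) \<partial>lborel) \<longlonglongrightarrow> 0"
    and trace_approx: "(\<lambda>n. \<integral>\<^sup>+ x\<in>{-1<..<1}. ennreal ((norm (u n (x, 0) - T x))\<^sup>2) \<partial>lborel) \<longlonglongrightarrow> 0"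
    using trace unfolding has_trace_def by blast
  have "infdist (half_ball_mean v) N \<le> 8 * sqrt (W * energy_s a g1 g2) + \<delta>" if "0 < \<delta>" for \<delta>
  proof -
    define \<eta> where "\<eta> = (\<delta> / K)\<^sup>2"
    have "0 < \<eta>"
      using \<open>0 < \<delta>\<close> \<open>0 < K\<close> by (simp add: \<eta>_def)
    then obtain n where
      "(\<integral>\<^sup>+ p\<in>half_ball. ennreal (snd p powr a *
        ((norm (u n p - v p))\<^sup>2 + (norm (dx (u n) p - g1 p))\<^sup>2 + (norm (dy (u n) p - g2 p))\<^sup>2)) \<partial>lborel) < ennreal \<eta>"
      "(\<integral>\<^sup>+ x\<in>{-1<..<1}. ennreal ((norm (u n (x, 0) - T x))\<^sup>2) \<partial>lborel) < ennreal \<eta>"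
      using eventually_conj[OF order_tendstoD(2)[OF approx] order_tendstoD(2)[OF trace_approx], of "ennreal \<eta>" "ennreal \<eta>"]
      unfolding eventually_sequentially by auto
    then have "infdist (half_ball_mean v) N
        \<le> 8 * sqrt (W * energy_s a g1 g2) + (sqrt (W * \<eta>) + 4 * sqrt (W * (2 * \<eta>)) + sqrt \<eta>)"
      unfolding W_def using \<open>0 < \<eta>\<close> AE_in
      by (intro infdist_half_ball_mean_le_approximation[where u = "u n"] smooth_on_UNIV_imp_c1_function[OF smooth] a finite)
        (simp_all add: less_imp_le)
    also have "sqrt (W * \<eta>) + 4 * sqrt (W * (2 * \<eta>)) + sqrt \<eta> = K * sqrt \<eta>"
      by (simp add: K_def real_sqrt_mult algebra_simps)
    also have "K * sqrt \<eta> = \<delta>"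
      using \<open>0 < \<delta>\<close> \<open>0 < K\<close> by (simp add: \<eta>_def)
    finally show ?thesis .
  qed
  then have "infdist (half_ball_mean v) N \<le> 8 * sqrt (W * energy_s a g1 g2)"
    by (rule field_le_epsilon)
  then show ?thesis
    by (simp only: W_def real_sqrt_mult mult.assoc)
qed

lemma infdist_half_ball_mean_le_energy:
  fixes v g1 g2 :: "real \<times> real \<Rightarrow> 'e::euclidean_space" and T :: "real \<Rightarrow> 'e"
  assumes "a < 1" and H1: "weighted_H1 a v g1 g2" and trace: "has_trace a v g1 g2 T"
    and "AE x in lborel. x \<in> {-1<..<1} \<longrightarrow> T x \<in> N"
  shows "infdist (half_ball_mean v) N \<le> 8 * sqrt (2 / (1 - a)) * sqrt (energy_s a g1 g2)"
proof -
  \<comment> \<open>the data are only given on the half ball; extending them by zero makes them Borel\<close>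
  define extend where "extend f p = indicator half_ball p *\<^sub>R f p" for f :: "real \<times> real \<Rightarrow> 'e" and p
  have extend: "p \<in> half_ball \<Longrightarrow> extend f p = f p" for f p
    by (simp add: extend_def)
  have [measurable]: "extend v \<in> borel_measurable borel" "extend g1 \<in> borel_measurable borel" "extend g2 \<in> borel_measurable borel"
    using H1 by (simp_all add: weighted_H1_def set_borel_measurable_def extend_def[abs_def])
  have "(\<integral>\<^sup>+ p\<in>half_ball. ennreal (snd p powr a *
      ((norm (extend v p))\<^sup>2 + (norm (extend g1 p))\<^sup>2 + (norm (extend g2 p))\<^sup>2)) \<partial>lborel)
    = (\<integral>\<^sup>+ p\<in>half_ball. ennreal (snd p powr a * ((norm (v p))\<^sup>2 + (norm (g1 p))\<^sup>2 + (norm (g2 p))\<^sup>2)) \<partial>lborel)"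
    by (intro nn_integral_cong) (simp add: extend split: split_indicator)
  also have "\<dots> < \<infinity>"
    using H1 unfolding weighted_H1_def by blast
  finally have "(\<integral>\<^sup>+ p\<in>half_ball. ennreal (snd p powr a *
      ((norm (extend v p))\<^sup>2 + (norm (extend g1 p))\<^sup>2 + (norm (extend g2 p))\<^sup>2)) \<partial>lborel) < \<infinity>" .
  moreover have "has_trace a (extend v) (extend g1) (extend g2) T"
    using trace by (subst has_trace_cong) (simp_all add: extend)
  ultimately have "infdist (half_ball_mean (extend v)) N \<le> 8 * sqrt (2 / (1 - a)) * sqrt (energy_s a (extend g1) (extend g2))"
    using assms by (intro infdist_half_ball_mean_le_energy_borel) simp_all
  then show ?thesis
    by (simp add: half_ball_mean_cong[of "extend v" v] energy_s_cong[of "extend g1" g1 "extend g2" g2] extend)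
qed

theorem lemma3p5:
  fixes s :: real
  assumes "0 < s" and "s < 1/2"
  shows "\<exists>C::real. \<forall>(N::'e::euclidean_space set) v g1 g2 T.
           compact N \<and> smooth_submanifold N \<and>
           weighted_H1 (1 - 2 * s) v g1 g2 \<and> has_trace (1 - 2 * s) v g1 g2 T \<and>
           (AE x in lborel. x \<in> {-1<..<1} \<longrightarrow> T x \<in> N) \<longrightarrow>
           infdist ((2/pi) *\<^sub>R (LINT p:half_ball|lborel. v p)) N
             \<le> C * sqrt (energy_s (1 - 2 * s) g1 g2)"
proof (intro exI[of _ "8 / sqrt s"] allI impI, elim conjE)
  fix N :: "'e set" and v g1 g2 :: "real \<times> real \<Rightarrow> 'e" and T :: "real \<Rightarrow> 'e"
  assume "weighted_H1 (1 - 2 * s) v g1 g2" "has_trace (1 - 2 * s) v g1 g2 T"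
    "AE x in lborel. x \<in> {-1<..<1} \<longrightarrow> T x \<in> N"
  then have "infdist (half_ball_mean v) N \<le> 8 * sqrt (2 / (1 - (1 - 2 * s))) * sqrt (energy_s (1 - 2 * s) g1 g2)"
    using \<open>0 < s\<close> by (intro infdist_half_ball_mean_le_energy) simp_all
  moreover have "sqrt (2 / (1 - (1 - 2 * s))) = 1 / sqrt s"
    by (simp add: real_sqrt_divide)
  ultimately have "infdist (half_ball_mean v) N \<le> 8 / sqrt s * sqrt (energy_s (1 - 2 * s) g1 g2)"
    by (simp only: times_divide_eq_right mult_1_right)
  then show "infdist ((2/pi) *\<^sub>R (LINT p:half_ball|lborel. v p)) N \<le> 8 / sqrt s * sqrt (energy_s (1 - 2 * s) g1 g2)"
    unfolding half_ball_mean_def .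
qed

end
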